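(* Let $A$ be a commutative semiring (not necessarily idempotent), $M$ a flat $A$-module, and $v:A^n\to M$ a homomorphism from a finite free module. Suppose $f,g:A\to A^n$ are homomorphisms with $v\circ f=v\circ g$. Then there exist a finite free module $A^m$ and homomorphisms $u:A^n\to A^m$, $w:A^m\to M$ with $v=w\circ u$ and $u\circ f=u\circ g$.
   Context: Modules over a semiring $A$ are commutative monoids with a compatible $A$-action; the category is semiadditive and has a tensor product $\otimes_A$. An $A$-module $M$ is flat if the functor $-\otimes_A M$ is exact (preserves finite limits as well as finite colimits). *)

theory Defs
  imports Main "HOL-Library.Multiset"
begin

text \<open>The scalars form the type 'a; we allow the
  trivial semiring (hence no 0 ~= 1 requirement).\<close>

record ('a, 'm) smodule =
  mcarrier :: "'m set"
  mzero    :: 'm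
  madd     :: "'m \<Rightarrow> 'm \<Rightarrow> 'm"
  msmul    :: "'a \<Rightarrow> 'm \<Rightarrow> 'm"

definition is_module :: "('a::{comm_semiring_0,comm_monoid_mult}, 'm) smodule \<Rightarrow> bool" where
  "is_module N \<longleftrightarrow>
     mzero N \<in> mcarrier N \<and>
     (\<forall>x\<in>mcarrier N. \<forall>y\<in>mcarrier N. madd N x y \<in> mcarrier N) \<and>
     (\<forall>a. \<forall>x\<in>mcarrier N. msmul N a x \<in> mcarrier N) \<and>
     (\<forall>x\<in>mcarrier N. \<forall>y\<in>mcarrier N. \<forall>z\<in>mcarrier N.
        madd N (madd N x y) z = madd N x (madd N y z)) \<and>
     (\<forall>x\<in>mcarrier N. \<forall>y\<in>mcarrier N. madd N x y = madd N y x) \<and>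
     (\<forall>x\<in>mcarrier N. madd N (mzero N) x = x) \<and>
     (\<forall>a. \<forall>x\<in>mcarrier N. \<forall>y\<in>mcarrier N.
        msmul N a (madd N x y) = madd N (msmul N a x) (msmul N a y)) \<and>
     (\<forall>a b. \<forall>x\<in>mcarrier N. msmul N (a + b) x = madd N (msmul N a x) (msmul N b x)) \<and>
     (\<forall>a b. \<forall>x\<in>mcarrier N. msmul N (a * b) x = msmul N a (msmul N b x)) \<and>
     (\<forall>x\<in>mcarrier N. msmul N 1 x = x) \<and>
     (\<forall>x\<in>mcarrier N. msmul N 0 x = mzero N) \<and>
     (\<forall>a. msmul N a (mzero N) = mzero N)"

definition mhom :: "('a::{comm_semiring_0,comm_monoid_mult}, 'm) smodule \<Rightarrow> ('a, 'n) smodule \<Rightarrow> ('m \<Rightarrow> 'n) \<Rightarrow> bool" where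
  "mhom N N' h \<longleftrightarrow>
     (\<forall>x\<in>mcarrier N. h x \<in> mcarrier N') \<and>
     h (mzero N) = mzero N' \<and>
     (\<forall>x\<in>mcarrier N. \<forall>y\<in>mcarrier N. h (madd N x y) = madd N' (h x) (h y)) \<and>
     (\<forall>a. \<forall>x\<in>mcarrier N. h (msmul N a x) = msmul N' a (h x))"

definition regular_mod :: "('a::{comm_semiring_0,comm_monoid_mult}, 'a) smodule" where
  "regular_mod = \<lparr>mcarrier = UNIV, mzero = 0, madd = (+), msmul = (*)\<rparr>"

definition free_mod :: "nat \<Rightarrow> ('a::{comm_semiring_0,comm_monoid_mult}, nat \<Rightarrow> 'a) smodule" where
  "free_mod n = \<lparr>mcarrier = {x. \<forall>i\<ge>n. x i = 0}, mzero = (\<lambda>_. 0),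
                 madd = (\<lambda>x y i. x i + y i), msmul = (\<lambda>a x i. a * x i)\<rparr>"

text \<open>Tensor product N \<otimes>_A M: formal sums (multisets of pairs) modulo the congruence
  generated by the bilinearity relations.\<close>
inductive tens_rel :: "('a::{comm_semiring_0,comm_monoid_mult}, 'n) smodule \<Rightarrow> ('a, 'm) smodule \<Rightarrow>
    ('n \<times> 'm) multiset \<Rightarrow> ('n \<times> 'm) multiset \<Rightarrow> bool"
  for N :: "('a, 'n) smodule" and M :: "('a, 'm) smodule" where
  trefl: "set_mset s \<subseteq> mcarrier N \<times> mcarrier M \<Longrightarrow> tens_rel N M s s"
| tsym: "tens_rel N M s t \<Longrightarrow> tens_rel N M t s"
| ttrans: "tens_rel N M s t \<Longrightarrow> tens_rel N M t u \<Longrightarrow> tens_rel N M s u"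
| tcong: "tens_rel N M s t \<Longrightarrow> set_mset u \<subseteq> mcarrier N \<times> mcarrier M \<Longrightarrow>
            tens_rel N M (s + u) (t + u)"
| taddl: "x \<in> mcarrier N \<Longrightarrow> x' \<in> mcarrier N \<Longrightarrow> y \<in> mcarrier M \<Longrightarrow>
            tens_rel N M {#(madd N x x', y)#} {#(x, y), (x', y)#}"
| taddr: "x \<in> mcarrier N \<Longrightarrow> y \<in> mcarrier M \<Longrightarrow> y' \<in> mcarrier M \<Longrightarrow>
            tens_rel N M {#(x, madd M y y')#} {#(x, y), (x, y')#}"
| tsmul: "x \<in> mcarrier N \<Longrightarrow> y \<in> mcarrier M \<Longrightarrow>
            tens_rel N M {#(msmul N a x, y)#} {#(x, msmul M a y)#}"
| tzerol: "y \<in> mcarrier M \<Longrightarrow> tens_rel N M {#(mzero N, y)#} {#}"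
| tzeror: "x \<in> mcarrier N \<Longrightarrow> tens_rel N M {#(x, mzero M)#} {#}"

definition tclass :: "('a::{comm_semiring_0,comm_monoid_mult}, 'n) smodule \<Rightarrow> ('a, 'm) smodule \<Rightarrow>
    ('n \<times> 'm) multiset \<Rightarrow> ('n \<times> 'm) multiset set" where
  "tclass N M s = {t. tens_rel N M s t}"

definition tensor :: "('a::{comm_semiring_0,comm_monoid_mult}, 'n) smodule \<Rightarrow> ('a, 'm) smodule \<Rightarrow>
    ('a, ('n \<times> 'm) multiset set) smodule" where
  "tensor N M = \<lparr>
     mcarrier = {tclass N M s | s. set_mset s \<subseteq> mcarrier N \<times> mcarrier M},
     mzero = tclass N M {#},
     madd = (\<lambda>C D. {u. \<exists>s\<in>C. \<exists>t\<in>D. tens_rel N M (s + t) u}),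
     msmul = (\<lambda>a C. {u. \<exists>s\<in>C. tens_rel N M (image_mset (\<lambda>(x, y). (msmul N a x, y)) s) u})\<rparr>"

text \<open>The map h \<otimes> id_M : N \<otimes> M \<rightarrow> N' \<otimes> M induced by h : N \<rightarrow> N'.\<close>
definition tmap :: "('a::{comm_semiring_0,comm_monoid_mult}, 'n) smodule \<Rightarrow> ('a, 'n2) smodule \<Rightarrow>
    ('a, 'm) smodule \<Rightarrow> ('n \<Rightarrow> 'n2) \<Rightarrow> ('n \<times> 'm) multiset set \<Rightarrow> ('n2 \<times> 'm) multiset set" where
  "tmap N N' M h C = {u. \<exists>s\<in>C. tens_rel N' M (image_mset (\<lambda>(x, y). (h x, y)) s) u}"

definition prod_mod :: "('a::{comm_semiring_0,comm_monoid_mult}, 'n) smodule \<Rightarrow> ('a, 'k) smodule \<Rightarrow>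
    ('a, 'n \<times> 'k) smodule" where
  "prod_mod N1 N2 = \<lparr>mcarrier = mcarrier N1 \<times> mcarrier N2,
     mzero = (mzero N1, mzero N2),
     madd = (\<lambda>(x1, x2) (y1, y2). (madd N1 x1 y1, madd N2 x2 y2)),
     msmul = (\<lambda>a (x1, x2). (msmul N1 a x1, msmul N2 a x2))\<rparr>"

text \<open>Universe of test modules for exactness: modules whose carrier consists of
  elements of type (nat \<Rightarrow> 'a) set (this contains isomorphic copies of all
  quotients of A^\<nat>, in particular of all countably generated modules).\<close>
type_synonym 'a univ = "(nat \<Rightarrow> 'a) set"

text \<open>-\<otimes>M preserves finite limits: terminal object, binary products, equalizers
  (canonical comparison maps are bijections).\<close>
definition tensor_preserves_finite_limits :: "('a::{comm_semiring_0,comm_monoid_mult}, 'm) smodule \<Rightarrow> bool" where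
  "tensor_preserves_finite_limits M \<longleftrightarrow>
    (\<forall>Z :: ('a, 'a univ) smodule. is_module Z \<and> mcarrier Z = {mzero Z} \<longrightarrow>
        (\<exists>t. mcarrier (tensor Z M) = {t})) \<and>
    (\<forall>(N1 :: ('a, 'a univ) smodule) (N2 :: ('a, 'a univ) smodule).
        is_module N1 \<and> is_module N2 \<longrightarrow>
        bij_betw (\<lambda>t. (tmap (prod_mod N1 N2) N1 M fst t, tmap (prod_mod N1 N2) N2 M snd t))
          (mcarrier (tensor (prod_mod N1 N2) M))
          (mcarrier (tensor N1 M) \<times> mcarrier (tensor N2 M))) \<and>
    (\<forall>(N1 :: ('a, 'a univ) smodule) (N2 :: ('a, 'a univ) smodule) f g.
        is_module N1 \<and> is_module N2 \<and> mhom N1 N2 f \<and> mhom N1 N2 g \<longrightarrow>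
        (let E = N1\<lparr>mcarrier := {x \<in> mcarrier N1. f x = g x}\<rparr> in
           inj_on (tmap E N1 M id) (mcarrier (tensor E M)) \<and>
           tmap E N1 M id ` mcarrier (tensor E M) =
             {t \<in> mcarrier (tensor N1 M). tmap N1 N2 M f t = tmap N1 N2 M g t}))"

definition flat :: "('a::{comm_semiring_0,comm_monoid_mult}, 'm) smodule \<Rightarrow> bool" where
  "flat M \<longleftrightarrow> is_module M \<and> tensor_preserves_finite_limits M"

end

theory Submission
  imports Defs
begin

text \<open>Put \<open>f\<^sub>1 = f 1\<close>, \<open>g\<^sub>1 = g 1\<close> and let \<open>E = {k \<in> A\<^sup>n. \<langle>k, f\<^sub>1\<rangle> = \<langle>k, g\<^sub>1\<rangle>}\<close> be the equalizer of
  the two functionals \<open>\<langle>-, f\<^sub>1\<rangle>, \<langle>-, g\<^sub>1\<rangle> : A\<^sup>n \<rightarrow> A\<close>.  Both functionals send the tensor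
  \<open>\<Sum>\<^sub>i e\<^sub>i \<otimes> v e\<^sub>i\<close> of \<open>A\<^sup>n \<otimes> M\<close> to \<open>1 \<otimes> v f\<^sub>1 = 1 \<otimes> v g\<^sub>1\<close>, so by flatness it equals some
  \<open>\<Sum>\<^sub>j k\<^sub>j \<otimes> \<mu>\<^sub>j\<close> with all \<open>k\<^sub>j \<in> E\<close>.  Then \<open>u x = (\<langle>k\<^sub>j, x\<rangle>)\<^sub>j\<close> and \<open>w y = \<Sum>\<^sub>j y\<^sub>j \<mu>\<^sub>j\<close> do the job:
  \<open>u f = u g\<close> since every \<open>k\<^sub>j\<close> lies in \<open>E\<close>, and \<open>w (u x) = v x\<close> since \<open>k \<otimes> \<mu> \<mapsto> \<langle>k, x\<rangle> \<mu>\<close> is a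
  well-defined map \<open>A\<^sup>n \<otimes> M \<rightarrow> M\<close> sending both tensors to these two values.\<close>

context
  fixes M :: "('a::{comm_semiring_0,comm_monoid_mult}, 'm) smodule"
  assumes M: "is_module M"
begin

lemma mzero_closed: "mzero M \<in> mcarrier M"
  using M unfolding is_module_def by (elim conjE) metis

lemma madd_closed: "x \<in> mcarrier M \<Longrightarrow> y \<in> mcarrier M \<Longrightarrow> madd M x y \<in> mcarrier M"
  using M unfolding is_module_def by (elim conjE) metis

lemma msmul_closed: "x \<in> mcarrier M \<Longrightarrow> msmul M a x \<in> mcarrier M"
  using M unfolding is_module_def by (elim conjE) metis

lemma madd_assoc:
  "x \<in> mcarrier M \<Longrightarrow> y \<in> mcarrier M \<Longrightarrow> z \<in> mcarrier M \<Longrightarrow>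
    madd M (madd M x y) z = madd M x (madd M y z)"
  using M unfolding is_module_def by (elim conjE) metis

lemma madd_commute: "x \<in> mcarrier M \<Longrightarrow> y \<in> mcarrier M \<Longrightarrow> madd M x y = madd M y x"
  using M unfolding is_module_def by (elim conjE) metis

lemma madd_left_commute:
  "x \<in> mcarrier M \<Longrightarrow> y \<in> mcarrier M \<Longrightarrow> z \<in> mcarrier M \<Longrightarrow>
    madd M x (madd M y z) = madd M y (madd M x z)"
  by (metis madd_assoc madd_commute)

lemma madd_zero_left: "x \<in> mcarrier M \<Longrightarrow> madd M (mzero M) x = x"
  using M unfolding is_module_def by (elim conjE) metis

lemma madd_zero_right: "x \<in> mcarrier M \<Longrightarrow> madd M x (mzero M) = x"
  by (metis madd_zero_left madd_commute mzero_closed)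

lemma msmul_madd:
  "x \<in> mcarrier M \<Longrightarrow> y \<in> mcarrier M \<Longrightarrow> msmul M a (madd M x y) = madd M (msmul M a x) (msmul M a y)"
  using M unfolding is_module_def by (elim conjE) metis

lemma msmul_add: "x \<in> mcarrier M \<Longrightarrow> msmul M (a + b) x = madd M (msmul M a x) (msmul M b x)"
  using M unfolding is_module_def by (elim conjE) metis

lemma msmul_mult: "x \<in> mcarrier M \<Longrightarrow> msmul M (a * b) x = msmul M a (msmul M b x)"
  using M unfolding is_module_def by (elim conjE) metis

lemma msmul_zero_left: "x \<in> mcarrier M \<Longrightarrow> msmul M 0 x = mzero M"
  using M unfolding is_module_def by (elim conjE) metis

lemma msmul_mzero: "msmul M a (mzero M) = mzero M"
  using M unfolding is_module_def by (elim conjE) metis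

end

section \<open>Finite sums in a module\<close>

text \<open>Summands outside the carrier are replaced by zero, so that the folding function
  commutes without side conditions.\<close>

definition carrier_part ::
  "('a::{comm_semiring_0,comm_monoid_mult}, 'm) smodule \<Rightarrow> 'm \<Rightarrow> 'm" where
  "carrier_part M z = (if z \<in> mcarrier M then z else mzero M)"

definition msum ::
  "('a::{comm_semiring_0,comm_monoid_mult}, 'm) smodule \<Rightarrow> ('b \<Rightarrow> 'm) \<Rightarrow> 'b multiset \<Rightarrow> 'm" where
  "msum M h s =
    fold_mset (\<lambda>p acc. madd M (carrier_part M (h p)) (carrier_part M acc)) (mzero M) s"

lemma carrier_part_id [simp]: "z \<in> mcarrier M \<Longrightarrow> carrier_part M z = z"
  by (simp add: carrier_part_def)

lemma msum_empty [simp]: "msum M h {#} = mzero M"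
  by (simp add: msum_def)

context
  fixes M :: "('a::{comm_semiring_0,comm_monoid_mult}, 'm) smodule"
  assumes M: "is_module M"
begin

lemma carrier_part_closed: "carrier_part M z \<in> mcarrier M"
  by (simp add: carrier_part_def mzero_closed[OF M])

lemma comp_fun_commute_msum:
  "comp_fun_commute (\<lambda>p acc. madd M (carrier_part M (h p)) (carrier_part M acc))"
  by standard
     (simp add: fun_eq_iff carrier_part_closed madd_closed[OF M] madd_left_commute[OF M])

lemma msum_closed: "msum M h s \<in> mcarrier M"
  by (cases s)
     (simp_all add: msum_def comp_fun_commute.fold_mset_add_mset[OF comp_fun_commute_msum]
       mzero_closed[OF M] madd_closed[OF M] carrier_part_closed)

lemma msum_add_mset_carrier_part: "msum M h (add_mset p s) = madd M (carrier_part M (h p)) (msum M h s)"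
  using msum_closed[of h s]
  by (simp add: msum_def comp_fun_commute.fold_mset_add_mset[OF comp_fun_commute_msum])

lemma msum_add_mset: "h p \<in> mcarrier M \<Longrightarrow> msum M h (add_mset p s) = madd M (h p) (msum M h s)"
  by (simp add: msum_add_mset_carrier_part)

lemma msum_single: "h p \<in> mcarrier M \<Longrightarrow> msum M h {#p#} = h p"
  by (simp add: msum_add_mset madd_zero_right[OF M])

lemma msum_union: "msum M h (s + t) = madd M (msum M h s) (msum M h t)"
proof (induction t)
  case empty
  then show ?case by (simp add: madd_zero_right[OF M] msum_closed)
next
  case (add p t)
  then show ?case
    by (simp add: msum_add_mset_carrier_part madd_left_commute[OF M] carrier_part_closed msum_closed)
qed

lemma msum_cong: "(\<And>p. p \<in># s \<Longrightarrow> h p = h' p) \<Longrightarrow> msum M h s = msum M h' s"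
  by (induction s) (simp_all add: msum_add_mset_carrier_part)

lemma msum_image_mset: "msum M h (image_mset g s) = msum M (h \<circ> g) s"
  by (induction s) (simp_all add: msum_add_mset_carrier_part)

lemma msum_mzero: "msum M (\<lambda>_. mzero M) s = mzero M"
  by (induction s) (simp_all add: msum_add_mset mzero_closed[OF M] madd_zero_left[OF M])

lemma msum_madd:
  assumes "\<And>p. p \<in># s \<Longrightarrow> h p \<in> mcarrier M \<and> h' p \<in> mcarrier M"
  shows "msum M (\<lambda>p. madd M (h p) (h' p)) s = madd M (msum M h s) (msum M h' s)"
  using assms
proof (induction s)
  case empty
  then show ?case by (simp add: madd_zero_left[OF M] mzero_closed[OF M])
next
  case (add p s)
  then have "h p \<in> mcarrier M" "h' p \<in> mcarrier M" by auto
  with add show ?case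
    by (simp add: msum_add_mset madd_closed[OF M] madd_assoc[OF M] madd_left_commute[OF M] msum_closed)
qed

lemma msum_msmul:
  "(\<And>p. p \<in># s \<Longrightarrow> h p \<in> mcarrier M) \<Longrightarrow> msum M (\<lambda>p. msmul M c (h p)) s = msmul M c (msum M h s)"
  by (induction s)
     (simp_all add: msmul_mzero[OF M] msum_add_mset msmul_closed[OF M] msmul_madd[OF M] msum_closed)

end

section \<open>Tensor products\<close>

declare tens_rel.ttrans [trans]

lemma tens_rel_image_mset:
  assumes F: "mhom N N' F"
  shows "tens_rel N M s t \<Longrightarrow>
    tens_rel N' M (image_mset (\<lambda>(x, y). (F x, y)) s) (image_mset (\<lambda>(x, y). (F x, y)) t)"
proof (induction rule: tens_rel.induct)
  case (trefl s)
  then show ?case using F unfolding mhom_def by (intro tens_rel.trefl) fastforce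
next
  case (tcong s t u)
  then show ?case using F unfolding mhom_def by (simp, intro tens_rel.tcong) fastforce+
qed (use F in \<open>auto simp: mhom_def intro: tens_rel.intros\<close>)

lemma image_mset_tensor_carrier:
  "mhom N N' F \<Longrightarrow> set_mset s \<subseteq> mcarrier N \<times> mcarrier M \<Longrightarrow>
    set_mset (image_mset (\<lambda>(x, y). (F x, y)) s) \<subseteq> mcarrier N' \<times> mcarrier M"
  by (force simp: mhom_def)

lemma tclass_eqI: "tens_rel N M s t \<Longrightarrow> tclass N M s = tclass N M t"
  unfolding tclass_def by (blast intro: tens_rel.ttrans tens_rel.tsym)

lemma tmap_tclass:
  assumes F: "mhom N N' F" and s: "set_mset s \<subseteq> mcarrier N \<times> mcarrier M"
  shows "tmap N N' M F (tclass N M s) = tclass N' M (image_mset (\<lambda>(x, y). (F x, y)) s)"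
proof
  show "tmap N N' M F (tclass N M s) \<subseteq> tclass N' M (image_mset (\<lambda>(x, y). (F x, y)) s)"
    unfolding tmap_def tclass_def using tens_rel_image_mset[OF F] by (blast intro: tens_rel.ttrans)
  have "s \<in> tclass N M s" using s unfolding tclass_def by (blast intro: tens_rel.trefl)
  then show "tclass N' M (image_mset (\<lambda>(x, y). (F x, y)) s) \<subseteq> tmap N N' M F (tclass N M s)"
    unfolding tmap_def tclass_def by blast
qed

definition tensor_eval ::
  "('a::{comm_semiring_0,comm_monoid_mult}, 'm) smodule \<Rightarrow> ('n \<Rightarrow> 'a) \<Rightarrow> ('n \<times> 'm) multiset \<Rightarrow> 'm" where
  "tensor_eval M \<phi> s = msum M (\<lambda>(k, y). msmul M (\<phi> k) y) s"

lemma tensor_eval_tens_rel: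
  assumes M: "is_module M"
    and add: "\<And>a b. a \<in> mcarrier N \<Longrightarrow> b \<in> mcarrier N \<Longrightarrow> \<phi> (madd N a b) = \<phi> a + \<phi> b"
    and smul: "\<And>c a. a \<in> mcarrier N \<Longrightarrow> \<phi> (msmul N c a) = c * \<phi> a"
    and zero: "\<phi> (mzero N) = 0"
  shows "tens_rel N M s t \<Longrightarrow> tensor_eval M \<phi> s = tensor_eval M \<phi> t"
  unfolding tensor_eval_def
proof (induction rule: tens_rel.induct)
  case (tcong s t u)
  then show ?case by (simp add: msum_union[OF M])
next
  case (taddl x x' y)
  then show ?case
    by (simp add: msum_add_mset[OF M] msmul_closed[OF M] madd_zero_right[OF M] madd_closed[OF M]
        add msmul_add[OF M])
next
  case (taddr x y y')
  then show ?case
    by (simp add: msum_add_mset[OF M] msmul_closed[OF M] madd_zero_right[OF M] madd_closed[OF M]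
        msmul_madd[OF M])
next
  case (tsmul x y a)
  then show ?case
    by (simp add: msum_single[OF M] msmul_closed[OF M] smul mult.commute flip: msmul_mult[OF M])
next
  case (tzerol y)
  then show ?case by (simp add: msum_single[OF M] mzero_closed[OF M] zero msmul_zero_left[OF M])
next
  case (tzeror x)
  then show ?case by (simp add: msum_single[OF M] mzero_closed[OF M] msmul_mzero[OF M])
qed auto

lemma flat_equalizer_lift:
  fixes N N' :: "('a::{comm_semiring_0,comm_monoid_mult}, 'a univ) smodule"
  assumes "flat M" and "is_module N" and "is_module N'"
    and F: "mhom N N' F" and G: "mhom N N' G"
    and s: "set_mset s \<subseteq> mcarrier N \<times> mcarrier M"
    and FG: "tens_rel N' M (image_mset (\<lambda>(x, y). (F x, y)) s) (image_mset (\<lambda>(x, y). (G x, y)) s)"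
  obtains s' where "set_mset s' \<subseteq> {x \<in> mcarrier N. F x = G x} \<times> mcarrier M" and "tens_rel N M s' s"
proof -
  define E where "E = N\<lparr>mcarrier := {x \<in> mcarrier N. F x = G x}\<rparr>"
  have image: "tmap E N M id ` mcarrier (tensor E M) =
      {t \<in> mcarrier (tensor N M). tmap N N' M F t = tmap N N' M G t}"
    using assms unfolding flat_def tensor_preserves_finite_limits_def E_def Let_def by blast
  have "tclass N M s \<in> {t \<in> mcarrier (tensor N M). tmap N N' M F t = tmap N N' M G t}"
    using s tmap_tclass[OF F s] tmap_tclass[OF G s] tclass_eqI[OF FG] by (auto simp: tensor_def)
  then obtain s' where s': "set_mset s' \<subseteq> mcarrier E \<times> mcarrier M"
    and lifted: "tmap E N M id (tclass E M s') = tclass N M s"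
    unfolding image[symmetric] by (auto simp: tensor_def)
  have incl: "mhom E N id" by (simp add: mhom_def E_def)
  have "s \<in> tclass N M s" using s unfolding tclass_def by (blast intro: tens_rel.trefl)
  then have "tens_rel N M s' s"
    using lifted unfolding tmap_tclass[OF incl s'] by (simp add: tclass_def case_prod_beta) blast
  with s' show ?thesis by (intro that) (simp_all add: E_def)
qed

section \<open>Finite free modules\<close>

lemma is_module_free_mod: "is_module (free_mod n)"
  unfolding is_module_def free_mod_def by (auto simp: algebra_simps)

definition unit_vec :: "nat \<Rightarrow> nat \<Rightarrow> 'a::{comm_semiring_0,comm_monoid_mult}" where
  "unit_vec i = (\<lambda>j. if j = i then 1 else 0)"

definition dot :: "nat \<Rightarrow> (nat \<Rightarrow> 'a::{comm_semiring_0,comm_monoid_mult}) \<Rightarrow> (nat \<Rightarrow> 'a) \<Rightarrow> 'a" where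
  "dot n x y = (\<Sum>j<n. x j * y j)"

lemma unit_vec_in_free_mod: "i < n \<Longrightarrow> unit_vec i \<in> mcarrier (free_mod n)"
  by (simp add: unit_vec_def free_mod_def)

lemma dot_unit_vec_left:
  assumes "i < n" shows "dot n (unit_vec i) x = x i"
proof -
  have "(\<Sum>j<n. unit_vec i j * x j) = (\<Sum>j<n. if j = i then x i else 0)"
    by (rule sum.cong) (auto simp: unit_vec_def)
  then show ?thesis using assms by (simp add: dot_def)
qed

lemma dot_linear_left:
  "dot n (\<lambda>i. a i + b i) x = dot n a x + dot n b x"
  "dot n (\<lambda>i. c * a i) x = c * dot n a x"
  "dot n (\<lambda>_. 0) x = 0"
  by (simp_all add: dot_def sum.distrib sum_distrib_left algebra_simps)

lemma dot_linear_right: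
  "dot n k (\<lambda>i. a i + b i) = dot n k a + dot n k b"
  "dot n k (\<lambda>i. c * a i) = c * dot n k a"
  "dot n k (\<lambda>_. 0) = 0"
  by (simp_all add: dot_def sum.distrib sum_distrib_left algebra_simps)

lemma mhom_regular_free_mod:
  assumes "mhom regular_mod (free_mod n) f"
  obtains y where "y \<in> mcarrier (free_mod n)" and "f = (\<lambda>a i. a * y i)"
proof
  show "f 1 \<in> mcarrier (free_mod n)" using assms by (simp add: mhom_def regular_mod_def)
  have "\<forall>a x. f (a * x) = msmul (free_mod n) a (f x)"
    using assms by (simp add: mhom_def regular_mod_def)
  then have scale: "f (a * 1) = msmul (free_mod n) a (f 1)" for a by blast
  have "f a = (\<lambda>i. a * f 1 i)" for a
    using scale[of a] by (simp add: free_mod_def)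
  then show "f = (\<lambda>a i. a * f 1 i)" by (rule ext)
qed

lemma mhom_free_mod_expansion:
  assumes M: "is_module M" and v: "mhom (free_mod n) M v" and x: "x \<in> mcarrier (free_mod n)"
  shows "v x = msum M (\<lambda>i. msmul M (x i) (v (unit_vec i))) (mset [0..<n])"
proof -
  have v_closed: "v y \<in> mcarrier M" if "y \<in> mcarrier (free_mod n)" for y
    using v that by (simp add: mhom_def)
  have v_madd: "v (madd (free_mod n) y z) = madd M (v y) (v z)"
    if "y \<in> mcarrier (free_mod n)" "z \<in> mcarrier (free_mod n)" for y z
    using v that by (simp add: mhom_def)
  have v_msmul: "v (msmul (free_mod n) a y) = msmul M a (v y)"
    if "y \<in> mcarrier (free_mod n)" for a y
    using v that by (simp add: mhom_def)
  have "v (\<lambda>i. if i < k then x i else 0) =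
      msum M (\<lambda>i. msmul M (x i) (v (unit_vec i))) (mset [0..<k])" if "k \<le> n" for k
    using that
  proof (induction k)
    case 0
    then show ?case using v by (simp add: mhom_def free_mod_def)
  next
    case (Suc k)
    let ?r = "\<lambda>i. if i < k then x i else 0"
    have k: "k < n" using Suc.prems by simp
    have r: "?r \<in> mcarrier (free_mod n)" using x by (simp add: free_mod_def)
    have "(\<lambda>i. if i < Suc k then x i else 0) =
        madd (free_mod n) ?r (msmul (free_mod n) (x k) (unit_vec k))"
      by (auto simp: free_mod_def unit_vec_def fun_eq_iff less_Suc_eq)
    then have "v (\<lambda>i. if i < Suc k then x i else 0) =
        madd M (v ?r) (msmul M (x k) (v (unit_vec k)))"
      by (simp add: v_madd v_msmul r unit_vec_in_free_mod[OF k] msmul_closed[OF is_module_free_mod])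
    also have "\<dots> = madd M (msmul M (x k) (v (unit_vec k))) (v ?r)"
      using k by (simp add: madd_commute[OF M] msmul_closed[OF M] v_closed r unit_vec_in_free_mod)
    finally show ?case
      using Suc k by (simp add: msum_add_mset[OF M] msmul_closed[OF M] v_closed unit_vec_in_free_mod)
  qed
  moreover have "(\<lambda>i. if i < n then x i else 0) = x" using x by (auto simp: free_mod_def)
  ultimately show ?thesis by (metis order_refl)
qed

section \<open>Test modules of singletons\<close>

text \<open>The flatness hypothesis only speaks about modules whose elements are sets of vectors;
  a module is transported there by replacing each element \<open>x\<close> with \<open>{x}\<close>.\<close>

definition singleton_mod ::
  "('a::{comm_semiring_0,comm_monoid_mult}, 'b) smodule \<Rightarrow> ('a, 'b set) smodule" where
  "singleton_mod N = \<lparr>mcarrier = (\<lambda>x. {x}) ` mcarrier N, mzero = {mzero N},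
     madd = (\<lambda>X Y. {madd N (the_elem X) (the_elem Y)}), msmul = (\<lambda>a X. {msmul N a (the_elem X)})\<rparr>"

definition singleton_map :: "('b \<Rightarrow> 'c) \<Rightarrow> 'b set \<Rightarrow> 'c set" where
  "singleton_map h X = {h (the_elem X)}"

lemma singleton_mod_simps [simp]:
  "mcarrier (singleton_mod N) = (\<lambda>x. {x}) ` mcarrier N"
  "mzero (singleton_mod N) = {mzero N}"
  "madd (singleton_mod N) X Y = {madd N (the_elem X) (the_elem Y)}"
  "msmul (singleton_mod N) a X = {msmul N a (the_elem X)}"
  by (simp_all add: singleton_mod_def)

lemma is_module_singleton_mod_iff: "is_module (singleton_mod N) \<longleftrightarrow> is_module N"
  unfolding is_module_def by (simp add: image_iff)

lemma mhom_singleton_map: "mhom N N' h \<Longrightarrow> mhom (singleton_mod N) (singleton_mod N') (singleton_map h)"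
  unfolding mhom_def singleton_map_def by auto

lemma tens_rel_free_mod_one_normal_form:
  assumes M: "is_module M"
    and "set_mset s \<subseteq> mcarrier (singleton_mod (free_mod 1)) \<times> mcarrier M"
  shows "tens_rel (singleton_mod (free_mod 1)) M s
      {#({unit_vec 0}, tensor_eval M (\<lambda>K. the_elem K 0) s)#}"
  using assms(2)
proof (induction s)
  case empty
  show ?case
    by (simp add: tensor_eval_def tens_rel.tsym tens_rel.tzeror unit_vec_in_free_mod)
next
  case (add p s)
  let ?N = "singleton_mod (free_mod 1) :: ('a, (nat \<Rightarrow> 'a) set) smodule"
  let ?e = "{unit_vec 0} :: (nat \<Rightarrow> 'a) set"
  let ?y = "tensor_eval M (\<lambda>K. the_elem K 0) s"
  obtain \<kappa> y where p: "p = ({\<kappa>}, y)" and \<kappa>: "\<kappa> \<in> mcarrier (free_mod 1)" and y: "y \<in> mcarrier M"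
    using add.prems by auto
  have e: "?e \<in> mcarrier ?N" by (simp add: unit_vec_in_free_mod)
  have y': "?y \<in> mcarrier M" unfolding tensor_eval_def by (rule msum_closed[OF M])
  have "msmul ?N (\<kappa> 0) ?e = {\<kappa>}"
    using \<kappa> by (auto simp: free_mod_def unit_vec_def fun_eq_iff)
  then have single: "tens_rel ?N M {#({\<kappa>}, y)#} {#(?e, msmul M (\<kappa> 0) y)#}"
    using tens_rel.tsmul[OF e y, of "\<kappa> 0"] by simp
  have IH: "tens_rel ?N M s {#(?e, ?y)#}" using add by auto
  have "tens_rel ?N M (add_mset ({\<kappa>}, y) s) {#(?e, ?y), ({\<kappa>}, y)#}"
    using tens_rel.tcong[OF IH, of "{#({\<kappa>}, y)#}"] \<kappa> y by (simp add: add_mset_commute)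
  also have "tens_rel ?N M \<dots> {#(?e, ?y), (?e, msmul M (\<kappa> 0) y)#}"
    using tens_rel.tcong[OF single, of "{#(?e, ?y)#}"] e y' by simp
  also have "tens_rel ?N M \<dots> {#(?e, madd M (msmul M (\<kappa> 0) y) ?y)#}"
    using tens_rel.tsym[OF tens_rel.taddr[OF e msmul_closed[OF M y] y']]
    by (simp add: add_mset_commute)
  finally show ?case
    using p y by (simp add: tensor_eval_def msum_add_mset[OF M] msmul_closed[OF M])
qed

lemma tens_rel_free_mod_one_if_tensor_eval_eq:
  assumes "is_module M"
    and "set_mset s \<subseteq> mcarrier (singleton_mod (free_mod 1)) \<times> mcarrier M"
    and "set_mset t \<subseteq> mcarrier (singleton_mod (free_mod 1)) \<times> mcarrier M"
    and "tensor_eval M (\<lambda>K. the_elem K 0) s = tensor_eval M (\<lambda>K. the_elem K 0) t"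
  shows "tens_rel (singleton_mod (free_mod 1)) M s t"
  using tens_rel_free_mod_one_normal_form[OF assms(1,2)]
    tens_rel_free_mod_one_normal_form[OF assms(1,3)] assms(4)
  by (metis tens_rel.tsym tens_rel.ttrans)

definition dot_functional ::
  "nat \<Rightarrow> (nat \<Rightarrow> 'a::{comm_semiring_0,comm_monoid_mult}) \<Rightarrow> (nat \<Rightarrow> 'a) \<Rightarrow> nat \<Rightarrow> 'a" where
  "dot_functional n y x = (\<lambda>i. if i = 0 then dot n x y else 0)"

lemma mhom_dot_functional: "mhom (free_mod n) (free_mod 1) (dot_functional n y)"
  by (auto simp: mhom_def free_mod_def dot_functional_def fun_eq_iff dot_linear_left)

definition canonical_tensor ::
  "nat \<Rightarrow> ((nat \<Rightarrow> 'a::{comm_semiring_0,comm_monoid_mult}) \<Rightarrow> 'm) \<Rightarrow> ((nat \<Rightarrow> 'a) set \<times> 'm) multiset" where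
  "canonical_tensor n v = image_mset (\<lambda>i. ({unit_vec i}, v (unit_vec i))) (mset [0..<n])"

lemma canonical_tensor_carrier:
  "mhom (free_mod n) M v \<Longrightarrow>
    set_mset (canonical_tensor n v) \<subseteq> mcarrier (singleton_mod (free_mod n)) \<times> mcarrier M"
  by (auto simp: canonical_tensor_def mhom_def unit_vec_in_free_mod)

lemma tensor_eval_canonical_tensor:
  assumes M: "is_module M" and v: "mhom (free_mod n) M v" and x: "x \<in> mcarrier (free_mod n)"
  shows "tensor_eval M (\<lambda>K. dot n (the_elem K) x) (canonical_tensor n v) = v x"
  unfolding tensor_eval_def canonical_tensor_def msum_image_mset[OF M]
    mhom_free_mod_expansion[OF M v x]
  by (rule msum_cong[OF M]) (simp add: dot_unit_vec_left)

lemma tensor_eval_dot_functional_canonical_tensor: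
  assumes "is_module M" and "mhom (free_mod n) M v" and "y \<in> mcarrier (free_mod n)"
  shows "tensor_eval M (\<lambda>K. the_elem K 0)
      (image_mset (\<lambda>(x, z). (singleton_map (dot_functional n y) x, z)) (canonical_tensor n v)) = v y"
  using tensor_eval_canonical_tensor[OF assms]
  by (simp add: tensor_eval_def canonical_tensor_def msum_image_mset[OF assms(1)] comp_def
      singleton_map_def dot_functional_def dot_def mult.commute)

definition coords ::
  "nat \<Rightarrow> (nat \<Rightarrow> 'a::{comm_semiring_0,comm_monoid_mult}) list \<Rightarrow> (nat \<Rightarrow> 'a) \<Rightarrow> nat \<Rightarrow> 'a" where
  "coords n ks x = (\<lambda>j. if j < length ks then dot n (ks ! j) x else 0)"

definition lincomb ::
  "('a::{comm_semiring_0,comm_monoid_mult}, 'm) smodule \<Rightarrow> 'm list \<Rightarrow> (nat \<Rightarrow> 'a) \<Rightarrow> 'm" where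
  "lincomb M ys c = msum M (\<lambda>j. msmul M (c j) (ys ! j)) (mset [0..<length ys])"

lemma mhom_coords: "mhom (free_mod n) (free_mod (length ks)) (coords n ks)"
  by (auto simp: mhom_def coords_def free_mod_def fun_eq_iff dot_linear_right)

lemma mhom_lincomb:
  assumes M: "is_module M" and ys: "set ys \<subseteq> mcarrier M"
  shows "mhom (free_mod (length ys)) M (lincomb M ys)"
proof -
  have y: "ys ! j \<in> mcarrier M" if "j < length ys" for j
    using ys that by auto
  have "lincomb M ys (\<lambda>_. 0) = msum M (\<lambda>_. mzero M) (mset [0..<length ys])"
    unfolding lincomb_def by (rule msum_cong[OF M]) (simp add: y msmul_zero_left[OF M])
  then have zero: "lincomb M ys (\<lambda>_. 0) = mzero M"
    by (simp add: msum_mzero[OF M])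
  have add: "lincomb M ys (\<lambda>i. b i + c i) = madd M (lincomb M ys b) (lincomb M ys c)" for b c
  proof -
    have "lincomb M ys (\<lambda>i. b i + c i) =
        msum M (\<lambda>j. madd M (msmul M (b j) (ys ! j)) (msmul M (c j) (ys ! j))) (mset [0..<length ys])"
      unfolding lincomb_def by (rule msum_cong[OF M]) (simp add: y msmul_add[OF M])
    also have "\<dots> = madd M (lincomb M ys b) (lincomb M ys c)"
      unfolding lincomb_def by (rule msum_madd[OF M]) (simp add: y msmul_closed[OF M])
    finally show ?thesis .
  qed
  have smul: "lincomb M ys (\<lambda>i. a * c i) = msmul M a (lincomb M ys c)" for a c
  proof -
    have "lincomb M ys (\<lambda>i. a * c i) = msum M (\<lambda>j. msmul M a (msmul M (c j) (ys ! j))) (mset [0..<length ys])"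
      unfolding lincomb_def by (rule msum_cong[OF M]) (simp add: y msmul_mult[OF M])
    also have "\<dots> = msmul M a (lincomb M ys c)"
      unfolding lincomb_def by (rule msum_msmul[OF M]) (simp add: y msmul_closed[OF M])
    finally show ?thesis .
  qed
  show ?thesis
    using zero add smul by (simp add: mhom_def free_mod_def lincomb_def msum_closed[OF M])
qed

lemma lincomb_coords:
  assumes M: "is_module M" and v: "mhom (free_mod n) M v"
    and rel: "tens_rel (singleton_mod (free_mod n)) M (mset xs) (canonical_tensor n v)"
    and x: "x \<in> mcarrier (free_mod n)"
  shows "lincomb M (map snd xs) (coords n (map (the_elem \<circ> fst) xs) x) = v x"
proof -
  let ?\<phi> = "\<lambda>K. dot n (the_elem K) x"
  have "lincomb M (map snd xs) (coords n (map (the_elem \<circ> fst) xs) x) =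
      msum M (\<lambda>j. msmul M (?\<phi> (fst (xs ! j))) (snd (xs ! j))) (mset [0..<length xs])"
    unfolding lincomb_def coords_def length_map by (rule msum_cong[OF M]) auto
  also have "\<dots> = tensor_eval M ?\<phi> (mset xs)"
    unfolding tensor_eval_def by (subst map_nth[symmetric]) (simp add: msum_image_mset[OF M] comp_def case_prod_beta)
  also have "\<dots> = tensor_eval M ?\<phi> (canonical_tensor n v)"
    by (rule tensor_eval_tens_rel[OF M _ _ _ rel]) (auto simp: free_mod_def dot_linear_left)
  also have "\<dots> = v x" by (rule tensor_eval_canonical_tensor[OF M v x])
  finally show ?thesis .
qed

lemma coords_scaled_eq:
  assumes "\<forall>k\<in>set ks. dot n k y = dot n k z"
  shows "coords n ks (\<lambda>i. a * y i) = coords n ks (\<lambda>i. a * z i)"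
  using assms by (auto simp: coords_def dot_linear_right fun_eq_iff)

lemma canonical_tensor_equalized:
  assumes M: "is_module M" and v: "mhom (free_mod n) M v"
    and y: "y \<in> mcarrier (free_mod n)" and z: "z \<in> mcarrier (free_mod n)" and "v y = v z"
  shows "tens_rel (singleton_mod (free_mod 1)) M
      (image_mset (\<lambda>(x, m). (singleton_map (dot_functional n y) x, m)) (canonical_tensor n v))
      (image_mset (\<lambda>(x, m). (singleton_map (dot_functional n z) x, m)) (canonical_tensor n v))"
proof -
  let ?image = "\<lambda>h. image_mset (\<lambda>(x, m). (singleton_map (dot_functional n h) x, m)) (canonical_tensor n v)"
  have carrier: "set_mset (?image h) \<subseteq> mcarrier (singleton_mod (free_mod 1)) \<times> mcarrier M" for h
    by (rule image_mset_tensor_carrier[OF mhom_singleton_map[OF mhom_dot_functional]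
          canonical_tensor_carrier[OF v]])
  have "tensor_eval M (\<lambda>K. the_elem K 0) (?image y) = tensor_eval M (\<lambda>K. the_elem K 0) (?image z)"
    using \<open>v y = v z\<close> by (simp add: tensor_eval_dot_functional_canonical_tensor[OF M v] y z)
  then show ?thesis by (rule tens_rel_free_mod_one_if_tensor_eval_eq[OF M carrier carrier])
qed

lemma flat_canonical_tensor_decomposition:
  assumes M: "is_module M" and "flat M" and v: "mhom (free_mod n) M v"
    and y: "y \<in> mcarrier (free_mod n)" and z: "z \<in> mcarrier (free_mod n)" and "v y = v z"
  obtains xs where "set (map snd xs) \<subseteq> mcarrier M"
    and "\<forall>k\<in>set (map (the_elem \<circ> fst) xs). dot n k y = dot n k z"
    and "tens_rel (singleton_mod (free_mod n)) M (mset xs) (canonical_tensor n v)"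
proof -
  let ?F = "singleton_map (dot_functional n y)"
  let ?G = "singleton_map (dot_functional n z)"
  have F: "mhom (singleton_mod (free_mod n)) (singleton_mod (free_mod 1)) ?F"
    and G: "mhom (singleton_mod (free_mod n)) (singleton_mod (free_mod 1)) ?G"
    by (rule mhom_singleton_map[OF mhom_dot_functional])+
  obtain s' where s': "set_mset s' \<subseteq> {x \<in> mcarrier (singleton_mod (free_mod n)). ?F x = ?G x} \<times> mcarrier M"
    and rel: "tens_rel (singleton_mod (free_mod n)) M s' (canonical_tensor n v)"
    by (rule flat_equalizer_lift[OF \<open>flat M\<close> _ _ F G canonical_tensor_carrier[OF v]
          canonical_tensor_equalized[OF assms(1,3-6)]])
       (simp_all add: is_module_singleton_mod_iff is_module_free_mod)
  obtain xs where xs: "mset xs = s'" using ex_mset by blast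
  have "dot n k y = dot n k z" if k: "k \<in> set (map (the_elem \<circ> fst) xs)" for k
  proof -
    obtain p where "p \<in> set xs" and "k = the_elem (fst p)" using k by auto
    with s' xs have "?F {k} = ?G {k}" by auto
    then have "dot_functional n y k 0 = dot_functional n z k 0" by (simp add: singleton_map_def)
    then show ?thesis by (simp add: dot_functional_def)
  qed
  moreover have "set (map snd xs) \<subseteq> mcarrier M" using s' xs by auto
  ultimately show ?thesis using rel xs that by blast
qed

theorem mainTheorem5:
  fixes M :: "('a::{comm_semiring_0,comm_monoid_mult}, 'm) smodule"
    and n :: nat
    and v :: "(nat \<Rightarrow> 'a) \<Rightarrow> 'm"
    and f g :: "'a \<Rightarrow> (nat \<Rightarrow> 'a)"
  assumes "is_module M"
    and "flat M"
    and "mhom (free_mod n) M v"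
    and "mhom regular_mod (free_mod n) f"
    and "mhom regular_mod (free_mod n) g"
    and "\<forall>x\<in>mcarrier regular_mod. v (f x) = v (g x)"
  shows "\<exists>(m::nat) (u :: (nat \<Rightarrow> 'a) \<Rightarrow> (nat \<Rightarrow> 'a)) (w :: (nat \<Rightarrow> 'a) \<Rightarrow> 'm).
           mhom (free_mod n) (free_mod m) u \<and> mhom (free_mod m) M w \<and>
           (\<forall>x\<in>mcarrier (free_mod n). v x = w (u x)) \<and>
           (\<forall>x\<in>mcarrier regular_mod. u (f x) = u (g x))"
proof -
  obtain f\<^sub>1 where f\<^sub>1: "f\<^sub>1 \<in> mcarrier (free_mod n)" and f: "f = (\<lambda>a i. a * f\<^sub>1 i)"
    using mhom_regular_free_mod[OF assms(4)] .
  obtain g\<^sub>1 where g\<^sub>1: "g\<^sub>1 \<in> mcarrier (free_mod n)" and g: "g = (\<lambda>a i. a * g\<^sub>1 i)"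
    using mhom_regular_free_mod[OF assms(5)] .
  have "v f\<^sub>1 = v g\<^sub>1" using bspec[OF assms(6), of 1] by (simp add: f g regular_mod_def)
  then obtain xs where ys: "set (map snd xs) \<subseteq> mcarrier M"
    and ks: "\<forall>k\<in>set (map (the_elem \<circ> fst) xs). dot n k f\<^sub>1 = dot n k g\<^sub>1"
    and rel: "tens_rel (singleton_mod (free_mod n)) M (mset xs) (canonical_tensor n v)"
    using flat_canonical_tensor_decomposition[OF assms(1-3) f\<^sub>1 g\<^sub>1] by blast
  let ?u = "coords n (map (the_elem \<circ> fst) xs)"
  let ?w = "lincomb M (map snd xs)"
  show ?thesis
  proof (intro exI[of _ "length xs"] exI[of _ ?u] exI[of _ ?w] conjI ballI)
    show "mhom (free_mod n) (free_mod (length xs)) ?u"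
      using mhom_coords[of n "map (the_elem \<circ> fst) xs"] by simp
    show "mhom (free_mod (length xs)) M ?w"
      using mhom_lincomb[OF assms(1) ys] by simp
    show "v x = ?w (?u x)" if "x \<in> mcarrier (free_mod n)" for x
      using lincomb_coords[OF assms(1,3) rel that] by (rule sym)
    show "?u (f a) = ?u (g a)" for a
      unfolding f g by (rule coords_scaled_eq[OF ks])
  qed
qed

end
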